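(* Let $K$ be a quasi-arithmetic self-similar compact set of ratio $\rho$ and module $\mu$, and put $T_u=K^{(u)}\setminus K^{(u+1)}$ for $u\ge0$. Let $n\in\mathbf{N}$, $p,q\in\mathbf{Z}$ and $v,w\in\mathbf{Z}_{\ge0}$ with $n/\rho^p\in T_v$ and $n/\rho^q\in T_w$. Then $p\mu-v=q\mu-w$.
   Context: For $A\subset\mathbf{R}$, $A'$ denotes the derived set, $A^{(0)}=A$, $A^{(n+1)}=(A^{(n)})'$. The reverse usual order is $x\preccurlyeq y$ iff $x\ge y$. A self-similar compact set of ratio $\rho>1$ and module $\mu\in\mathbf{N}$ is a compact set $K\subset[0,+\infty)$ with $\rho K^{(\mu)}=K$, well ordered by $\preccurlyeq$, of order type $\omega^\omega+1$. Such $K$ is called quasi-arithmetic if $\rho\ge2$ is a natural number and there is a function $\kappa\colon\mathbf{N}\setminus\rho\mathbf{N}\to\mathbf{Z}_{\ge0}$ with $K\setminus\{0\}=\{m/\rho^k: m\in\mathbf{N},\ \rho\nmid m,\ k\in\mathbf{Z},\ k\ge\kappa(m)\}$. *)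

theory Defs
  imports "HOL-Analysis.Analysis"
begin

definition derived_set :: "real set \<Rightarrow> real set" where
  "derived_set A = {x. x islimpt A}"

definition iter_derived :: "nat \<Rightarrow> real set \<Rightarrow> real set" where
  "iter_derived n A = (derived_set ^^ n) A"

text \<open>A concrete model of the ordinal omega^omega + 1.
  Elements of omega^omega are Cantor normal forms
  omega^k a_k + ... + omega^0 a_0, encoded as lists [a_k, ..., a_0] with a_k > 0
  (the empty list is 0), ordered first by length and then lexicographically.\<close>
definition cnf_set :: "nat list set" where
  "cnf_set = {xs. xs = [] \<or> hd xs \<noteq> 0}"

definition omega_omega_plus_one :: "nat list option set" where
  "omega_omega_plus_one = insert None (Some ` cnf_set)"

fun oo1_less :: "nat list option \<Rightarrow> nat list option \<Rightarrow> bool" where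
  "oo1_less (Some xs) (Some ys) = ((xs, ys) \<in> lenlex less_than)"
| "oo1_less (Some xs) None = True"
| "oo1_less None _ = False"

definition oo1_le :: "nat list option \<Rightarrow> nat list option \<Rightarrow> bool" where
  "oo1_le a b = (a = b \<or> oo1_less a b)"

definition rev_order_type_omega_omega_plus_one :: "real set \<Rightarrow> bool" where
  "rev_order_type_omega_omega_plus_one K =
     (\<exists>f. bij_betw f K omega_omega_plus_one \<and>
          (\<forall>x\<in>K. \<forall>y\<in>K. (x \<ge> y) = oo1_le (f x) (f y)))"

definition rev_well_ordered :: "real set \<Rightarrow> bool" where
  "rev_well_ordered K = (\<forall>S. S \<subseteq> K \<longrightarrow> S \<noteq> {} \<longrightarrow> (\<exists>m\<in>S. \<forall>s\<in>S. s \<le> m))"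

definition self_similar :: "real set \<Rightarrow> real \<Rightarrow> nat \<Rightarrow> bool" where
  "self_similar K \<rho> \<mu> =
     (compact K \<and> K \<subseteq> {0..} \<and> \<rho> > 1 \<and> \<mu> \<ge> 1 \<and>
      (\<lambda>x. \<rho> * x) ` iter_derived \<mu> K = K \<and>
      rev_well_ordered K \<and> rev_order_type_omega_omega_plus_one K)"

definition quasi_arithmetic :: "real set \<Rightarrow> nat \<Rightarrow> nat \<Rightarrow> bool" where
  "quasi_arithmetic K \<rho> \<mu> =
     (self_similar K (real \<rho>) \<mu> \<and> \<rho> \<ge> 2 \<and>
      (\<exists>\<kappa> :: nat \<Rightarrow> int. (\<forall>m. m \<ge> 1 \<longrightarrow> \<not> \<rho> dvd m \<longrightarrow> \<kappa> m \<ge> 0) \<and>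
         K - {0} = {real m / (real \<rho>) powi k | m k. m \<ge> 1 \<and> \<not> \<rho> dvd m \<and> k \<ge> \<kappa> m}))"

end

theory Submission
  imports Defs
begin

text \<open>Multiplication by a nonzero constant is a homeomorphism of the line, so it commutes
  with taking derived sets. Hence rho K^(mu) = K gives K^(mu j) = rho^-j K, and multiplying a
  point by rho^-j raises its Cantor-Bendixson rank by exactly mu j. As the levels T_u are pairwise
  disjoint, the rank of n / rho^p is p mu plus a constant.\<close>

lemma islimpt_scaleI:
  fixes c x :: real
  assumes "c \<noteq> 0" "x islimpt A"
  shows "c * x islimpt (\<lambda>y. c * y) ` A"
proof (rule islimpt_isCont_image[OF assms(2)])
  show "isCont (\<lambda>y. c * y) x" by simp
  show "\<forall>\<^sub>F y in at x. c * y \<noteq> c * x"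
    using assms(1) by (auto simp: eventually_at_filter)
qed

lemma image_scale_inverse_scale:
  fixes c :: real
  assumes "c \<noteq> 0"
  shows "(\<lambda>y. inverse c * y) ` (\<lambda>y. c * y) ` A = A"
  using assms by (simp add: image_image mult.assoc[symmetric])

lemma derived_set_scale:
  fixes c :: real
  assumes "c \<noteq> 0"
  shows "derived_set ((\<lambda>y. c * y) ` A) = (\<lambda>y. c * y) ` derived_set A"
proof
  show "(\<lambda>y. c * y) ` derived_set A \<subseteq> derived_set ((\<lambda>y. c * y) ` A)"
    using islimpt_scaleI[OF assms] by (auto simp: derived_set_def)
next
  show "derived_set ((\<lambda>y. c * y) ` A) \<subseteq> (\<lambda>y. c * y) ` derived_set A"
  proof
    fix z assume "z \<in> derived_set ((\<lambda>y. c * y) ` A)"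
    then have "inverse c * z islimpt (\<lambda>y. inverse c * y) ` (\<lambda>y. c * y) ` A"
      using islimpt_scaleI[of "inverse c"] assms by (simp add: derived_set_def)
    then have "inverse c * z \<in> derived_set A"
      using image_scale_inverse_scale[OF assms] by (simp add: derived_set_def)
    moreover have "z = c * (inverse c * z)" using assms by simp
    ultimately show "z \<in> (\<lambda>y. c * y) ` derived_set A" by blast
  qed
qed

lemma iter_derived_scale:
  fixes c :: real
  assumes "c \<noteq> 0"
  shows "iter_derived k ((\<lambda>y. c * y) ` A) = (\<lambda>y. c * y) ` iter_derived k A"
  by (induction k) (simp_all add: iter_derived_def derived_set_scale[OF assms])

lemma iter_derived_add: "iter_derived (a + b) A = iter_derived a (iter_derived b A)"
  by (simp add: iter_derived_def funpow_add)

lemma closed_iter_derived: "closed A \<Longrightarrow> closed (iter_derived k A)"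
  by (induction k) (simp_all add: iter_derived_def derived_set_def closed_limpts)

lemma iter_derived_Suc_subset: "closed A \<Longrightarrow> iter_derived (Suc k) A \<subseteq> iter_derived k A"
  using closed_iter_derived[of A k] closed_limpt[of "iter_derived k A"]
  by (auto simp: iter_derived_def derived_set_def)

lemma iter_derived_antimono:
  assumes "closed A" "a \<le> b"
  shows "iter_derived b A \<subseteq> iter_derived a A"
  using assms(2)
proof (induction b rule: dec_induct)
  case (step b)
  then show ?case using iter_derived_Suc_subset[OF assms(1), of b] by blast
qed simp

definition derived_layer :: "nat \<Rightarrow> real set \<Rightarrow> real set" where
  "derived_layer u A = iter_derived u A - iter_derived (Suc u) A"

lemma derived_layer_unique:
  assumes "closed A" "x \<in> derived_layer a A" "x \<in> derived_layer b A"
  shows "a = b"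
proof (rule ccontr)
  assume "a \<noteq> b"
  then consider "Suc a \<le> b" | "Suc b \<le> a" by linarith
  then show False
    using assms iter_derived_antimono[OF assms(1)] unfolding derived_layer_def
    by cases blast+
qed

lemma iter_derived_self_similar:
  fixes r :: real
  assumes "r \<noteq> 0" and self_sim: "(\<lambda>x. r * x) ` iter_derived m K = K"
  shows "iter_derived (m * j) K = (\<lambda>x. inverse r ^ j * x) ` K"
proof (induction j)
  case 0
  then show ?case by (simp add: iter_derived_def)
next
  case (Suc j)
  have base: "iter_derived m K = (\<lambda>x. inverse r * x) ` K"
    using image_scale_inverse_scale[OF assms(1), of "iter_derived m K"] self_sim by simp
  have "iter_derived (m * Suc j) K = iter_derived m (iter_derived (m * j) K)"
    by (metis iter_derived_add mult_Suc_right)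
  also have "\<dots> = (\<lambda>x. inverse r ^ j * x) ` iter_derived m K"
    using Suc assms(1) by (simp add: iter_derived_scale)
  also have "\<dots> = (\<lambda>x. inverse r ^ Suc j * x) ` K"
    using base by (simp add: image_image mult.assoc[symmetric] mult.commute)
  finally show ?case .
qed

lemma derived_layer_self_similar_shift:
  fixes r :: real
  assumes "r \<noteq> 0" "(\<lambda>x. r * x) ` iter_derived m K = K" "x \<in> derived_layer u K"
  shows "inverse r ^ j * x \<in> derived_layer (u + m * j) K"
proof -
  have c: "inverse r ^ j \<noteq> 0" using assms(1) by simp
  have shift: "iter_derived (t + m * j) K = (\<lambda>y. inverse r ^ j * y) ` iter_derived t K" for t
    using iter_derived_add iter_derived_self_similar[OF assms(1,2)] iter_derived_scale[OF c]
    by metis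
  have "inj (\<lambda>y. inverse r ^ j * y)" using c by (auto simp: inj_on_def)
  then show ?thesis
    using shift[of u] shift[of "Suc u"] assms(3)
    by (auto simp: derived_layer_def inj_image_mem_iff)
qed

lemma derived_layer_self_similar_rank:
  fixes r x :: real and p q :: int
  assumes "closed K" "r \<noteq> 0" "(\<lambda>x. r * x) ` iter_derived m K = K"
    and "x / r powi p \<in> derived_layer v K" "x / r powi q \<in> derived_layer w K"
  shows "p * int m - int v = q * int m - int w"
  using assms(4,5)
proof (induction p q arbitrary: v w rule: linorder_wlog)
  case (le p q)
  define j where "j = nat (q - p)"
  have q: "q = p + int j" using le.hyps by (simp add: j_def)
  have "x / r powi q = inverse r ^ j * (x / r powi p)"
    using assms(2) by (simp add: q power_int_add power_int_inverse field_simps)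
  then have "x / r powi q \<in> derived_layer (v + m * j) K"
    using derived_layer_self_similar_shift[OF assms(2,3) le.prems(1)] by simp
  then have "w = v + m * j"
    using derived_layer_unique[OF assms(1) le.prems(2)] by simp
  then show ?case by (simp add: q algebra_simps)
next
  case (sym p q)
  then show ?case by fastforce
qed

theorem mainTheorem5:
  fixes K :: "real set" and \<rho> \<mu> n v w :: nat and p q :: int
  assumes "quasi_arithmetic K \<rho> \<mu>"
    and "n \<ge> 1"
    and "real n / (real \<rho>) powi p \<in> iter_derived v K - iter_derived (v + 1) K"
    and "real n / (real \<rho>) powi q \<in> iter_derived w K - iter_derived (w + 1) K"
  shows "p * int \<mu> - int v = q * int \<mu> - int w"
proof -
  have "self_similar K (real \<rho>) \<mu>" "\<rho> \<ge> 2"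
    using assms(1) by (auto simp: quasi_arithmetic_def)
  then have "closed K" "real \<rho> \<noteq> 0" "(\<lambda>x. real \<rho> * x) ` iter_derived \<mu> K = K"
    by (auto simp: self_similar_def compact_imp_closed)
  then show ?thesis
    using assms(3,4) unfolding Suc_eq_plus1[symmetric] derived_layer_def[symmetric]
    by (rule derived_layer_self_similar_rank)
qed

end
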